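(* Let $I\subseteq S=\Bbbk[x_1,\dots,x_n]$ be a squarefree monomial ideal which is Gotzmann in $S$, and suppose $I\subseteq(x_i)$. Then the ideal $\frac{1}{x_i}I=\{f\in S: x_if\in I\}$ (generated by the monomials $m/x_i$ for $m$ a minimal generator of $I$) is Gotzmann in $S$.
   Context: Let $\Bbbk$ be a field and $S=\Bbbk[x_1,\dots,x_n]$, $\mathbf m=(x_1,\dots,x_n)$. A monomial ideal is squarefree if its minimal monomial generators are squarefree. For a homogeneous ideal $I$, $I_d$ is its degree-$d$ component, $|I_d|$ its $\Bbbk$-dimension, and $\mathbf m_1I_d$ the span of $\{x_jf: f\in I_d\}$. An ideal $I$ of $S$ is Gotzmann if for every $d$ and every homogeneous ideal $J\subseteq S$ with $|J_d|=|I_d|$ one has $|\mathbf m_1I_d|\le|\mathbf m_1J_d|$. *)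

theory Defs
  imports Complex_Main "HOL-Library.Poly_Mapping"
begin

text \<open>S = k[x_0,...,x_{n-1}] is the set of
 polynomials all of whose monomials only involve variables with index < n.\<close>

type_synonym 'k mpoly = "(nat \<Rightarrow>\<^sub>0 nat) \<Rightarrow>\<^sub>0 'k"

definition polyS :: "nat \<Rightarrow> ('k::field) mpoly set" where
  "polyS n = {p. \<forall>m \<in> Poly_Mapping.keys p. Poly_Mapping.keys m \<subseteq> {..<n}}"

definition var :: "nat \<Rightarrow> ('k::field) mpoly" where
  "var j = Poly_Mapping.single (Poly_Mapping.single j 1) 1"

definition monomial_pm :: "(nat \<Rightarrow>\<^sub>0 nat) \<Rightarrow> ('k::field) mpoly" where
  "monomial_pm m = Poly_Mapping.single m 1"

definition mdeg :: "(nat \<Rightarrow>\<^sub>0 nat) \<Rightarrow> nat" where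
  "mdeg m = (\<Sum>j\<in>Poly_Mapping.keys m. Poly_Mapping.lookup m j)"

definition kscale :: "'k::field \<Rightarrow> 'k mpoly \<Rightarrow> 'k mpoly" where
  "kscale c p = Poly_Mapping.map (\<lambda>a. c * a) p"

definition kspan :: "('k::field) mpoly set \<Rightarrow> 'k mpoly set" where
  "kspan V = module.span kscale V"

definition kdim :: "('k::field) mpoly set \<Rightarrow> nat" where
  "kdim V = vector_space.dim kscale V"

definition is_ideal :: "nat \<Rightarrow> ('k::field) mpoly set \<Rightarrow> bool" where
  "is_ideal n J \<longleftrightarrow> J \<subseteq> polyS n \<and> 0 \<in> J \<and>
     (\<forall>p\<in>J. \<forall>q\<in>J. p + q \<in> J) \<and> (\<forall>f\<in>polyS n. \<forall>p\<in>J. f * p \<in> J)"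

definition ideal_gen :: "nat \<Rightarrow> ('k::field) mpoly set \<Rightarrow> 'k mpoly set" where
  "ideal_gen n G = \<Inter>{J. is_ideal n J \<and> G \<subseteq> J}"

definition hcomp :: "nat \<Rightarrow> ('k::field) mpoly \<Rightarrow> 'k mpoly" where
  "hcomp d p = Abs_poly_mapping (\<lambda>m. Poly_Mapping.lookup p m when mdeg m = d)"

definition homogeneous :: "nat \<Rightarrow> ('k::field) mpoly \<Rightarrow> bool" where
  "homogeneous d p \<longleftrightarrow> (\<forall>m\<in>Poly_Mapping.keys p. mdeg m = d)"

definition homog_ideal :: "nat \<Rightarrow> ('k::field) mpoly set \<Rightarrow> bool" where
  "homog_ideal n J \<longleftrightarrow> is_ideal n J \<and> (\<forall>p\<in>J. \<forall>d. hcomp d p \<in> J)"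

definition degcomp :: "('k::field) mpoly set \<Rightarrow> nat \<Rightarrow> 'k mpoly set" where
  "degcomp I d = {p\<in>I. homogeneous d p}"

definition m1mul :: "nat \<Rightarrow> ('k::field) mpoly set \<Rightarrow> 'k mpoly set" where
  "m1mul n V = kspan {var j * f | j f. j < n \<and> f \<in> V}"

definition gotzmann :: "nat \<Rightarrow> ('k::field) mpoly set \<Rightarrow> bool" where
  "gotzmann n I \<longleftrightarrow> (\<forall>d. \<forall>J::'k mpoly set. homog_ideal n J \<and>
      kdim (degcomp J d) = kdim (degcomp I d) \<longrightarrow>
      kdim (m1mul n (degcomp I d)) \<le> kdim (m1mul n (degcomp J d)))"

definition squarefree_mon :: "nat \<Rightarrow> (nat \<Rightarrow>\<^sub>0 nat) \<Rightarrow> bool" where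
  "squarefree_mon n m \<longleftrightarrow> Poly_Mapping.keys m \<subseteq> {..<n} \<and> (\<forall>j. Poly_Mapping.lookup m j \<le> 1)"

text \<open>A squarefree monomial ideal: an ideal generated by squarefree monomials
  (equivalently, a monomial ideal whose minimal monomial generators are squarefree).\<close>
definition squarefree_monomial_ideal :: "nat \<Rightarrow> ('k::field) mpoly set \<Rightarrow> bool" where
  "squarefree_monomial_ideal n I \<longleftrightarrow>
     (\<exists>G. (\<forall>m\<in>G. squarefree_mon n m) \<and> I = ideal_gen n (monomial_pm ` G))"

definition colon_var :: "nat \<Rightarrow> nat \<Rightarrow> ('k::field) mpoly set \<Rightarrow> 'k mpoly set" where
  "colon_var n i I = {f \<in> polyS n. var i * f \<in> I}"

end

theory Submission
  imports Defs
begin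

text \<open>
  Multiplication by the variable x_i is an injective k-linear map
  S \<rightarrow> S which raises degrees by one, maps homogeneous ideals to homogeneous
  ideals and commutes with passing to m_1 V.  Hence for every set K of
  polynomials, the degree-d data of K (dimensions of K_d and m_1 K_d) coincide
  with the degree-(d+1) data of x_i K, and every competing homogeneous ideal J
  for K gives a competing ideal x_i J for x_i K.  So x_i K Gotzmann implies
  K Gotzmann (lemma gotzmann_of_var_mult_image).  If I \<subseteq> (x_i) then
  I = x_i \<cdot> (1/x_i) I, and the theorem follows.
\<close>

lemma kscale_conv: "kscale c p = Poly_Mapping.single 0 c * p"
  unfolding kscale_def by (rule mult_map_scale_conv_mult)

lemma vector_space_kscale: "vector_space (kscale :: 'k::field \<Rightarrow> 'k mpoly \<Rightarrow> 'k mpoly)"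
  by unfold_locales
    (simp_all add: kscale_conv algebra_simps single_add mult_single flip: mult.assoc)

lemma linear_mult_left:
  "Vector_Spaces.linear (kscale :: 'k::field \<Rightarrow> 'k mpoly \<Rightarrow> 'k mpoly) kscale (\<lambda>p. q * p)"
  unfolding Vector_Spaces.linear_def module_hom_def module_hom_axioms_def
  using vector_space_kscale by (auto simp: module_iff_vector_space kscale_conv algebra_simps)

lemma kdim_inj_linear_image:
  assumes "Vector_Spaces.linear (kscale :: 'k::field \<Rightarrow> 'k mpoly \<Rightarrow> 'k mpoly) kscale f"
    and "inj f"
  shows "kdim (f ` V) = kdim V"
proof -
  interpret lf: Vector_Spaces.linear kscale kscale f by fact
  obtain B where B: "B \<subseteq> V" "lf.vs1.independent B" "V \<subseteq> lf.vs1.span B" "card B = lf.vs1.dim V"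
    using lf.vs1.basis_exists[of V] by auto
  have span_B: "lf.vs1.span V = lf.vs1.span B"
    using B(1,3) lf.vs1.span_mono[of B V] lf.vs1.span_mono[of V "lf.vs1.span B"]
      lf.vs1.span_span[of B] by auto
  have inj_B: "inj_on f B"
    using assms(2) inj_on_subset by blast
  have "lf.vs1.independent (f ` B)"
    using lf.dependent_inj_imageD[of B] B(2) inj_on_subset[OF assms(2) subset_UNIV] by blast
  moreover have "lf.vs1.span (f ` V) = lf.vs1.span (f ` B)"
    using lf.span_image[of V] lf.span_image[of B] span_B by simp
  ultimately have "lf.vs1.dim (f ` V) = card (f ` B)"
    by (metis lf.vs1.dim_span lf.vs1.dim_eq_card_independent)
  with inj_B B(4) show ?thesis
    unfolding kdim_def by (simp add: card_image)
qed

lemma kspan_linear_image: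
  assumes "Vector_Spaces.linear (kscale :: 'k::field \<Rightarrow> 'k mpoly \<Rightarrow> 'k mpoly) kscale f"
  shows "kspan (f ` V) = f ` kspan V"
proof -
  interpret lf: Vector_Spaces.linear kscale kscale f by fact
  show ?thesis unfolding kspan_def by (rule lf.span_image)
qed

definition ee :: "nat \<Rightarrow> (nat \<Rightarrow>\<^sub>0 nat)" where
  "ee i = Poly_Mapping.single i 1"

lemma var_ee: "var i = Poly_Mapping.single (ee i) 1"
  unfolding var_def ee_def ..

lemma lookup_var_mult:
  "Poly_Mapping.lookup ((var i :: 'k::field mpoly) * p) k =
     (\<Sum>s. Poly_Mapping.lookup p s when k = ee i + s)"
  by (simp add: var_ee lookup_mult lookup_single when_mult)

lemma lookup_var_mult_shift:
  "Poly_Mapping.lookup ((var i :: 'k::field mpoly) * p) (ee i + s) = Poly_Mapping.lookup p s"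
  by (simp add: lookup_var_mult)

lemma lookup_var_mult_nondiv:
  "(\<And>s. k \<noteq> ee i + s) \<Longrightarrow> Poly_Mapping.lookup ((var i :: 'k::field mpoly) * p) k = 0"
  by (simp add: lookup_var_mult)

lemma keys_var_mult:
  "Poly_Mapping.keys ((var i :: 'k::field mpoly) * p) = (\<lambda>m. ee i + m) ` Poly_Mapping.keys p"
proof (rule set_eqI)
  fix k
  show "k \<in> Poly_Mapping.keys (var i * p) \<longleftrightarrow> k \<in> (\<lambda>m. ee i + m) ` Poly_Mapping.keys p"
  proof (cases "\<exists>s. k = ee i + s")
    case True
    then show ?thesis by (auto simp: lookup_var_mult_shift in_keys_iff)
  next
    case False
    then show ?thesis by (auto simp: lookup_var_mult_nondiv in_keys_iff)
  qed
qed

lemma inj_var_mult: "inj (\<lambda>p. (var i :: 'k::field mpoly) * p)"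
proof (rule injI)
  fix p q :: "'k mpoly"
  assume "var i * p = var i * q"
  then have "Poly_Mapping.lookup (var i * p) (ee i + s) = Poly_Mapping.lookup (var i * q) (ee i + s)" for s
    by (simp only:)
  then show "p = q"
    by (intro poly_mapping_eqI) (simp add: lookup_var_mult_shift)
qed

lemma keys_ee_plus: "Poly_Mapping.keys (ee i + m) = insert i (Poly_Mapping.keys m)"
  by (auto simp: ee_def in_keys_iff lookup_add lookup_single when_def split: if_splits)

lemma mdeg_as_sum:
  "finite A \<Longrightarrow> Poly_Mapping.keys m \<subseteq> A \<Longrightarrow> mdeg m = (\<Sum>j\<in>A. Poly_Mapping.lookup m j)"
  unfolding mdeg_def by (rule sum.mono_neutral_left) (auto simp: in_keys_iff)

lemma mdeg_ee_plus: "mdeg (ee i + m) = Suc (mdeg m)"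
proof -
  let ?A = "insert i (Poly_Mapping.keys m)"
  have "mdeg (ee i + m) = (\<Sum>j\<in>?A. Poly_Mapping.lookup (ee i + m) j)"
    by (rule mdeg_as_sum) (auto simp: keys_ee_plus)
  also have "\<dots> = (\<Sum>j\<in>?A. Poly_Mapping.lookup (ee i) j) + (\<Sum>j\<in>?A. Poly_Mapping.lookup m j)"
    by (simp add: lookup_add sum.distrib)
  also have "(\<Sum>j\<in>?A. Poly_Mapping.lookup (ee i) j) = 1"
    by (simp add: ee_def lookup_single when_def)
  also have "(\<Sum>j\<in>?A. Poly_Mapping.lookup m j) = mdeg m"
    by (rule mdeg_as_sum[symmetric]) auto
  finally show ?thesis by simp
qed

lemma homogeneous_var_mult:
  "homogeneous (Suc d) ((var i :: 'k::field mpoly) * p) \<longleftrightarrow> homogeneous d p"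
  unfolding homogeneous_def keys_var_mult by (auto simp: mdeg_ee_plus)

lemma polyS_var_mult: "i < n \<Longrightarrow> ((var i :: 'k::field mpoly) * p \<in> polyS n) \<longleftrightarrow> p \<in> polyS n"
  by (auto simp: polyS_def keys_var_mult keys_ee_plus)

lemma lookup_hcomp:
  "Poly_Mapping.lookup (hcomp d q) m = (Poly_Mapping.lookup q m when mdeg m = d)"
proof -
  have "finite {m. (Poly_Mapping.lookup q m when mdeg m = d) \<noteq> 0}"
    by (rule finite_subset[OF _ finite_lookup[of q]]) auto
  then show ?thesis unfolding hcomp_def by simp
qed

lemma hcomp_var_mult:
  "hcomp d ((var i :: 'k::field mpoly) * p) = (case d of 0 \<Rightarrow> 0 | Suc d' \<Rightarrow> var i * hcomp d' p)"
proof (rule poly_mapping_eqI)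
  fix k
  show "Poly_Mapping.lookup (hcomp d (var i * p)) k =
        Poly_Mapping.lookup (case d of 0 \<Rightarrow> 0 | Suc d' \<Rightarrow> var i * hcomp d' p) k"
  proof (cases "\<exists>s. k = ee i + s")
    case True
    then show ?thesis
      by (cases d) (auto simp: lookup_hcomp lookup_var_mult_shift mdeg_ee_plus)
  next
    case False
    then show ?thesis
      by (cases d) (simp_all add: lookup_hcomp lookup_var_mult_nondiv)
  qed
qed

lemma polyS_mult:
  assumes "f \<in> polyS n" "g \<in> polyS n"
  shows "(f * g :: 'k::field mpoly) \<in> polyS n"
  unfolding polyS_def
proof (intro CollectI ballI)
  fix m
  assume "m \<in> Poly_Mapping.keys (f * g)"
  then obtain a b where ab: "a \<in> Poly_Mapping.keys f" "b \<in> Poly_Mapping.keys g" "m = a + b"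
    using keys_mult[of f g] by blast
  then have "Poly_Mapping.keys m \<subseteq> Poly_Mapping.keys a \<union> Poly_Mapping.keys b"
    using keys_add[of a b] by simp
  with ab(1,2) assms show "Poly_Mapping.keys m \<subseteq> {..<n}"
    unfolding polyS_def by blast
qed

lemma polyS_add: "f \<in> polyS n \<Longrightarrow> g \<in> polyS n \<Longrightarrow> (f + g :: 'k::field mpoly) \<in> polyS n"
  unfolding polyS_def using keys_add[of f g] by (auto dest!: subsetD)

text \<open>x_i J is an ideal whenever J is, and homogeneous whenever J is; this
  turns competitors for K into competitors for x_i K.\<close>
lemma is_ideal_var_mult:
  assumes "i < n" and J: "is_ideal n (J :: 'k::field mpoly set)"
  shows "is_ideal n ((\<lambda>p. var i * p) ` J)"
  unfolding is_ideal_def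
proof (intro conjI ballI)
  show "(\<lambda>p. var i * p) ` J \<subseteq> polyS n"
    using J polyS_var_mult[OF assms(1)] unfolding is_ideal_def by auto
  show "0 \<in> (\<lambda>p. var i * p) ` J"
    using J unfolding is_ideal_def by (auto intro!: image_eqI[of _ _ 0])
next
  fix p q assume "p \<in> (\<lambda>p. var i * p) ` J" "q \<in> (\<lambda>p. var i * p) ` J"
  with J show "p + q \<in> (\<lambda>p. var i * p) ` J"
    unfolding is_ideal_def by (auto simp flip: distrib_left)
next
  fix f p :: "'k mpoly"
  assume "f \<in> polyS n" "p \<in> (\<lambda>p. var i * p) ` J"
  with J show "f * p \<in> (\<lambda>p. var i * p) ` J"
    unfolding is_ideal_def by (auto simp: mult.left_commute)
qed

lemma homog_ideal_var_mult:
  assumes "i < n" and J: "homog_ideal n (J :: 'k::field mpoly set)"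
  shows "homog_ideal n ((\<lambda>p. var i * p) ` J)"
proof -
  have "hcomp d (var i * p) \<in> (\<lambda>p. var i * p) ` J" if "p \<in> J" for p d
  proof (cases d)
    case 0
    then show ?thesis
      using J unfolding homog_ideal_def is_ideal_def
      by (auto simp: hcomp_var_mult intro!: image_eqI[of _ _ 0])
  next
    case (Suc d')
    then show ?thesis
      using J that unfolding homog_ideal_def by (auto simp: hcomp_var_mult)
  qed
  with assms is_ideal_var_mult show ?thesis
    unfolding homog_ideal_def by blast
qed

lemma ideal_gen_var_subset:
  assumes "i < n"
  shows "ideal_gen n {var i :: 'k::field mpoly} \<subseteq> (\<lambda>p. var i * p) ` polyS n"
proof -
  have "is_ideal n (polyS n :: 'k mpoly set)"
    unfolding is_ideal_def by (auto simp: polyS_add polyS_mult) (simp add: polyS_def)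
  then have "is_ideal n ((\<lambda>p. (var i :: 'k mpoly) * p) ` polyS n)"
    by (rule is_ideal_var_mult[OF assms])
  moreover have "var i \<in> (\<lambda>p. (var i :: 'k mpoly) * p) ` polyS n"
    by (auto simp: polyS_def intro!: image_eqI[of _ _ 1])
  ultimately show ?thesis
    unfolding ideal_gen_def by blast
qed

lemma var_mult_colon_var:
  assumes "i < n" and "I \<subseteq> ideal_gen n {var i :: 'k::field mpoly}"
  shows "(\<lambda>p. var i * p) ` colon_var n i I = I"
  using assms ideal_gen_var_subset[OF assms(1)] unfolding colon_var_def by blast

lemma degcomp_var_mult:
  "degcomp ((\<lambda>p. (var i :: 'k::field mpoly) * p) ` J) (Suc d) = (\<lambda>p. var i * p) ` degcomp J d"
  unfolding degcomp_def by (auto simp: homogeneous_var_mult)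

lemma m1mul_var_mult:
  "m1mul n ((\<lambda>p. (var i :: 'k::field mpoly) * p) ` V) = (\<lambda>p. var i * p) ` m1mul n V"
proof -
  have "{var j * f | j f. j < n \<and> f \<in> (\<lambda>p. (var i :: 'k mpoly) * p) ` V}
      = (\<lambda>p. var i * p) ` {var j * f | j f. j < n \<and> f \<in> V}"
    by (auto simp: mult.left_commute[of "var i"] image_iff) blast+
  then show ?thesis
    unfolding m1mul_def by (simp add: kspan_linear_image[OF linear_mult_left])
qed

lemma kdim_var_mult: "kdim ((\<lambda>p. (var i :: 'k::field mpoly) * p) ` V) = kdim V"
  by (rule kdim_inj_linear_image[OF linear_mult_left inj_var_mult])

text \<open>If x_i K is Gotzmann then so is K: a competitor J for K in degree d yields
  the competitor x_i J for x_i K in degree d+1 with the same dimensions.\<close>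
lemma gotzmann_of_var_mult_image:
  assumes "i < n" and "gotzmann n ((\<lambda>p. (var i :: 'k::field mpoly) * p) ` K)"
  shows "gotzmann n K"
  unfolding gotzmann_def
proof (intro allI impI)
  fix d and J :: "'k mpoly set"
  assume J: "homog_ideal n J \<and> kdim (degcomp J d) = kdim (degcomp K d)"
  let ?X = "\<lambda>V. (\<lambda>p. (var i :: 'k mpoly) * p) ` V"
  have "homog_ideal n (?X J)"
    using J homog_ideal_var_mult[OF assms(1)] by blast
  moreover have "kdim (degcomp (?X J) (Suc d)) = kdim (degcomp (?X K) (Suc d))"
    using J by (simp add: degcomp_var_mult kdim_var_mult)
  ultimately have "kdim (m1mul n (degcomp (?X K) (Suc d))) \<le> kdim (m1mul n (degcomp (?X J) (Suc d)))"
    using assms(2) unfolding gotzmann_def by blast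
  then show "kdim (m1mul n (degcomp K d)) \<le> kdim (m1mul n (degcomp J d))"
    by (simp add: degcomp_var_mult m1mul_var_mult kdim_var_mult)
qed

theorem lemma3p7:
  fixes I :: "('k::field) mpoly set" and n i :: nat
  assumes "i < n"
    and "squarefree_monomial_ideal n I"
    and "gotzmann n I"
    and "I \<subseteq> ideal_gen n {var i}"
  shows "gotzmann n (colon_var n i I)"
proof (rule gotzmann_of_var_mult_image[OF assms(1)])
  show "gotzmann n ((\<lambda>p. var i * p) ` colon_var n i I)"
    using assms(3) by (simp only: var_mult_colon_var[OF assms(1,4)])
qed

end
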